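(* If $(\Phi,\{\Phi_{f,x}\}_{x\in D},D)$ is a labeled compact information algebra, then its associated domain-free information algebra $(\Phi/\sigma,D)$ is a domain-free compact information algebra. Furthermore, if $(\Phi,\{\Phi_{f,x}\}_{x\in D},D)$ is a labeled s-compact information algebra, then $(\Phi/\sigma,D)$ is a domain-free s-compact information algebra.
   Context: A labeled information algebra $(\Phi,D)$ consists of a lattice $D$, a set $\Phi$ with labeling $d:\Phi\to D$, combination $\otimes$ and marginalization $\phi^{\downarrow x}$ for $x\le d(\phi)$, such that: $\otimes$ is associative and commutative; for each $s\in D$ there is $e_s$ with $d(e_s)=s$ and $e_s\otimes\phi=\phi$ whenever $d(\phi)=s$; $d(\phi\otimes\psi)=d(\phi)\vee d(\psi)$; $d(\phi^{\downarrow x})=x$; $(\phi^{\downarrow y})^{\downarrow x}=\phi^{\downarrow x}$ for $x\le y\le d(\phi)$; $(\phi\otimes\psi)^{\downarrow x}=\phi\otimes\psi^{\downarrow x\wedge y}$ when $d(\phi)=x$, $d(\psi)=y$; $e_y^{\downarrow x}=e_x$ for $x\le y$; $\phi\otimes\phi^{\downarrow x}=\phi$. In any (labeled or domain-free) information algebra, $\psi\le\phi$ iff $\psi\otimes\phi=\phi$; suprema refer to this order; $a\ll b$ means: for every directed $X$ with $b\le\vee X$ there is $c\in X$ with $a\le c$. $\Phi_x=\{\phi:d(\phi)=x\}$, $\ll_x$ is the way-below relation in $(\Phi_x,\le)$, and $\Phi_{f,x}=\{\psi\in\Phi_x:\psi\ll_x\psi\}$. A labeled compact (resp. s-compact) information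 algebra $(\Phi,\{\Gamma_x\}_{x\in D},D)$: $D$ has a top element $\top$, each $\Gamma_x\subseteq\Phi_x$ is closed under combination and contains $e_x$, and (convergency) every directed $X\subseteq\Gamma_x$ has a supremum $\vee X\in\Phi_x$; (density) $\phi=\vee\{\psi\in\Gamma_x:\psi\ll_x\phi\}$ for all $\phi\in\Phi_x$ (resp. (strong density) $\phi=\vee\{\psi^{\downarrow x}\in\Gamma_x:\ \psi\in\Phi,\ x\le d(\psi),\ \psi^{\downarrow x}\otimes e_\top\in\Gamma_\top,\ \psi^{\downarrow x}\ll_x\phi\}$ for all $\phi\in\Phi_x$); (compactness) for every directed $X\subseteq\Gamma_x$ and $\phi\in\Gamma_x$ with $\phi\le\vee X$ there is $\psi\in X$ with $\phi\le\psi$. In this case $\Gamma_x=\Phi_{f,x}$. The associated domain-free algebra: for $y\ge d(\phi)$ let $\phi^{\uparrow y}=\phi\otimes e_y$; $\phi\equiv\psi\pmod\sigma$ iff $\phi^{\uparrow d(\phi)\vee d(\psi)}=\psi^{\uparrow d(\phi)\vee d(\psi)}$; on $\Phi/\sigma$, $[\phi]_\sigma\otimes[\psi]_\sigma=[\phi\otimes\psi]_\sigma$ and $[\phi]_\sigma^{\Rightarrow x}=[(\phi^{\uparrow x\vee d(\phi)})^{\downarrow x}]_\sigma$. A domain-free information algebra $(\Phi',D)$ (combination associative, commutative, with neutral element $e$, focusing $\Rightarrow$ satisfying transitivity, combination, support and idempotency axioms), with $D$ having a top element, is compact (resp. s-compact) if there exists $\Gamma\subseteq\Phi'$, closed under combination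 and containing $e$, such that every directed subset of $\Gamma$ has a supremum in $\Phi'$; $\phi=\vee\{\psi\in\Gamma:\psi\ll\phi\}$ for all $\phi$ (resp. $\phi^{\Rightarrow x}=\vee\{\psi\in\Gamma:\psi=\psi^{\Rightarrow x}\ll\phi\}$ for all $\phi,x$); and for every directed $X\subseteq\Gamma$ and $\phi\in\Gamma$ with $\phi\le\vee X$ there is $\psi\in X$ with $\phi\le\psi$. *)

theory Defs
  imports Main
begin

definition directed_in :: "('b \<Rightarrow> 'b \<Rightarrow> bool) \<Rightarrow> 'b set \<Rightarrow> bool" where
  "directed_in le X \<longleftrightarrow> X \<noteq> {} \<and> (\<forall>a\<in>X. \<forall>b\<in>X. \<exists>c\<in>X. le a c \<and> le b c)"

definition is_lub_in :: "'b set \<Rightarrow> ('b \<Rightarrow> 'b \<Rightarrow> bool) \<Rightarrow> 'b set \<Rightarrow> 'b \<Rightarrow> bool" where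
  "is_lub_in A le X s \<longleftrightarrow> s \<in> A \<and> (\<forall>x\<in>X. le x s) \<and> (\<forall>u\<in>A. (\<forall>x\<in>X. le x u) \<longrightarrow> le s u)"

definition way_below_in :: "'b set \<Rightarrow> ('b \<Rightarrow> 'b \<Rightarrow> bool) \<Rightarrow> 'b \<Rightarrow> 'b \<Rightarrow> bool" where
  "way_below_in A le a b \<longleftrightarrow>
     (\<forall>X. X \<subseteq> A \<longrightarrow> directed_in le X \<longrightarrow>
        (\<forall>s. is_lub_in A le X s \<longrightarrow> le b s \<longrightarrow> (\<exists>c\<in>X. le a c)))"

definition info_le :: "('b \<Rightarrow> 'b \<Rightarrow> 'b) \<Rightarrow> 'b \<Rightarrow> 'b \<Rightarrow> bool" where
  "info_le comb \<psi> \<phi> \<longleftrightarrow> comb \<psi> \<phi> = \<phi>"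

section \<open>Labeled information algebras (Phi is the whole type 'a, D the lattice type 'l)\<close>

definition labeled_ia ::
  "('a \<Rightarrow> 'l::lattice) \<Rightarrow> ('a \<Rightarrow> 'a \<Rightarrow> 'a) \<Rightarrow> ('a \<Rightarrow> 'l \<Rightarrow> 'a) \<Rightarrow> ('l \<Rightarrow> 'a) \<Rightarrow> bool" where
  "labeled_ia d comb marg e \<longleftrightarrow>
     (\<forall>a b c. comb (comb a b) c = comb a (comb b c)) \<and>
     (\<forall>a b. comb a b = comb b a) \<and>
     (\<forall>s. d (e s) = s) \<and>
     (\<forall>s \<phi>. d \<phi> = s \<longrightarrow> comb (e s) \<phi> = \<phi>) \<and>
     (\<forall>\<phi> \<psi>. d (comb \<phi> \<psi>) = sup (d \<phi>) (d \<psi>)) \<and>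
     (\<forall>\<phi> x. x \<le> d \<phi> \<longrightarrow> d (marg \<phi> x) = x) \<and>
     (\<forall>\<phi> x y. x \<le> y \<longrightarrow> y \<le> d \<phi> \<longrightarrow> marg (marg \<phi> y) x = marg \<phi> x) \<and>
     (\<forall>\<phi> \<psi> x y. d \<phi> = x \<longrightarrow> d \<psi> = y \<longrightarrow>
         marg (comb \<phi> \<psi>) x = comb \<phi> (marg \<psi> (inf x y))) \<and>
     (\<forall>x y. x \<le> y \<longrightarrow> marg (e y) x = e x) \<and>
     (\<forall>\<phi> x. x \<le> d \<phi> \<longrightarrow> comb \<phi> (marg \<phi> x) = \<phi>)"

definition Phi_at :: "('a \<Rightarrow> 'l) \<Rightarrow> 'l \<Rightarrow> 'a set" where
  "Phi_at d x = {\<phi>. d \<phi> = x}"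

definition Phi_f :: "('a \<Rightarrow> 'l) \<Rightarrow> ('a \<Rightarrow> 'a \<Rightarrow> 'a) \<Rightarrow> 'l \<Rightarrow> 'a set" where
  "Phi_f d comb x = {\<psi> \<in> Phi_at d x. way_below_in (Phi_at d x) (info_le comb) \<psi> \<psi>}"

definition labeled_compact_base ::
  "('a \<Rightarrow> 'l::bounded_lattice_top) \<Rightarrow> ('a \<Rightarrow> 'a \<Rightarrow> 'a) \<Rightarrow> ('a \<Rightarrow> 'l \<Rightarrow> 'a) \<Rightarrow> ('l \<Rightarrow> 'a)
     \<Rightarrow> ('l \<Rightarrow> 'a set) \<Rightarrow> bool" where
  "labeled_compact_base d comb marg e \<Gamma> \<longleftrightarrow>
     labeled_ia d comb marg e \<and>
     (\<forall>x. \<Gamma> x \<subseteq> Phi_at d x \<and> e x \<in> \<Gamma> x \<and>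
          (\<forall>\<phi>\<in>\<Gamma> x. \<forall>\<psi>\<in>\<Gamma> x. comb \<phi> \<psi> \<in> \<Gamma> x)) \<and>
     (\<forall>x X. X \<subseteq> \<Gamma> x \<longrightarrow> directed_in (info_le comb) X \<longrightarrow>
          (\<exists>s. is_lub_in (Phi_at d x) (info_le comb) X s)) \<and>
     (\<forall>x X \<phi>. X \<subseteq> \<Gamma> x \<longrightarrow> directed_in (info_le comb) X \<longrightarrow> \<phi> \<in> \<Gamma> x \<longrightarrow>
          (\<exists>s. is_lub_in (Phi_at d x) (info_le comb) X s \<and> info_le comb \<phi> s) \<longrightarrow>
          (\<exists>\<psi>\<in>X. info_le comb \<phi> \<psi>))"

definition labeled_compact ::
  "('a \<Rightarrow> 'l::bounded_lattice_top) \<Rightarrow> ('a \<Rightarrow> 'a \<Rightarrow> 'a) \<Rightarrow> ('a \<Rightarrow> 'l \<Rightarrow> 'a) \<Rightarrow> ('l \<Rightarrow> 'a)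
     \<Rightarrow> ('l \<Rightarrow> 'a set) \<Rightarrow> bool" where
  "labeled_compact d comb marg e \<Gamma> \<longleftrightarrow>
     labeled_compact_base d comb marg e \<Gamma> \<and>
     (\<forall>x. \<forall>\<phi>\<in>Phi_at d x. is_lub_in (Phi_at d x) (info_le comb)
          {\<psi>\<in>\<Gamma> x. way_below_in (Phi_at d x) (info_le comb) \<psi> \<phi>} \<phi>)"

definition labeled_scompact ::
  "('a \<Rightarrow> 'l::bounded_lattice_top) \<Rightarrow> ('a \<Rightarrow> 'a \<Rightarrow> 'a) \<Rightarrow> ('a \<Rightarrow> 'l \<Rightarrow> 'a) \<Rightarrow> ('l \<Rightarrow> 'a)
     \<Rightarrow> ('l \<Rightarrow> 'a set) \<Rightarrow> bool" where
  "labeled_scompact d comb marg e \<Gamma> \<longleftrightarrow>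
     labeled_compact_base d comb marg e \<Gamma> \<and>
     (\<forall>x. \<forall>\<phi>\<in>Phi_at d x. is_lub_in (Phi_at d x) (info_le comb)
          {marg \<psi> x | \<psi>. x \<le> d \<psi> \<and> marg \<psi> x \<in> \<Gamma> x \<and>
               comb (marg \<psi> x) (e top) \<in> \<Gamma> top \<and>
               way_below_in (Phi_at d x) (info_le comb) (marg \<psi> x) \<phi>} \<phi>)"

definition df_ia :: "'b set \<Rightarrow> ('b \<Rightarrow> 'b \<Rightarrow> 'b) \<Rightarrow> 'b \<Rightarrow> ('b \<Rightarrow> 'l::lattice \<Rightarrow> 'b) \<Rightarrow> bool" where
  "df_ia P comb e foc \<longleftrightarrow>
     (\<forall>a\<in>P. \<forall>b\<in>P. comb a b \<in> P) \<and> e \<in> P \<and> (\<forall>a\<in>P. \<forall>x. foc a x \<in> P) \<and>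
     (\<forall>a\<in>P. \<forall>b\<in>P. \<forall>c\<in>P. comb (comb a b) c = comb a (comb b c)) \<and>
     (\<forall>a\<in>P. \<forall>b\<in>P. comb a b = comb b a) \<and>
     (\<forall>a\<in>P. comb e a = a) \<and>
     (\<forall>\<phi>\<in>P. \<forall>x y. foc (foc \<phi> x) y = foc \<phi> (inf x y)) \<and>
     (\<forall>\<phi>\<in>P. \<forall>\<psi>\<in>P. \<forall>x. foc (comb (foc \<phi> x) \<psi>) x = comb (foc \<phi> x) (foc \<psi> x)) \<and>
     (\<forall>\<phi>\<in>P. \<exists>x. foc \<phi> x = \<phi>) \<and>
     (\<forall>\<phi>\<in>P. \<forall>x. comb \<phi> (foc \<phi> x) = \<phi>)"

definition df_compact_base ::
  "'b set \<Rightarrow> ('b \<Rightarrow> 'b \<Rightarrow> 'b) \<Rightarrow> 'b \<Rightarrow> ('b \<Rightarrow> 'l::lattice \<Rightarrow> 'b) \<Rightarrow> 'b set \<Rightarrow> bool" where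
  "df_compact_base P comb e foc \<Gamma> \<longleftrightarrow>
     \<Gamma> \<subseteq> P \<and> e \<in> \<Gamma> \<and> (\<forall>a\<in>\<Gamma>. \<forall>b\<in>\<Gamma>. comb a b \<in> \<Gamma>) \<and>
     (\<forall>X. X \<subseteq> \<Gamma> \<longrightarrow> directed_in (info_le comb) X \<longrightarrow> (\<exists>s. is_lub_in P (info_le comb) X s)) \<and>
     (\<forall>X \<phi>. X \<subseteq> \<Gamma> \<longrightarrow> directed_in (info_le comb) X \<longrightarrow> \<phi> \<in> \<Gamma> \<longrightarrow>
          (\<exists>s. is_lub_in P (info_le comb) X s \<and> info_le comb \<phi> s) \<longrightarrow>
          (\<exists>\<psi>\<in>X. info_le comb \<phi> \<psi>))"

text \<open>D has a top element: ensured by the class bounded_lattice_top.\<close>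
definition df_compact ::
  "'b set \<Rightarrow> ('b \<Rightarrow> 'b \<Rightarrow> 'b) \<Rightarrow> 'b \<Rightarrow> ('b \<Rightarrow> 'l::bounded_lattice_top \<Rightarrow> 'b) \<Rightarrow> bool" where
  "df_compact P comb e foc \<longleftrightarrow> df_ia P comb e foc \<and>
     (\<exists>\<Gamma>. df_compact_base P comb e foc \<Gamma> \<and>
        (\<forall>\<phi>\<in>P. is_lub_in P (info_le comb) {\<psi>\<in>\<Gamma>. way_below_in P (info_le comb) \<psi> \<phi>} \<phi>))"

definition df_scompact ::
  "'b set \<Rightarrow> ('b \<Rightarrow> 'b \<Rightarrow> 'b) \<Rightarrow> 'b \<Rightarrow> ('b \<Rightarrow> 'l::bounded_lattice_top \<Rightarrow> 'b) \<Rightarrow> bool" where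
  "df_scompact P comb e foc \<longleftrightarrow> df_ia P comb e foc \<and>
     (\<exists>\<Gamma>. df_compact_base P comb e foc \<Gamma> \<and>
        (\<forall>\<phi>\<in>P. \<forall>x. is_lub_in P (info_le comb)
            {\<psi>\<in>\<Gamma>. foc \<psi> x = \<psi> \<and> way_below_in P (info_le comb) \<psi> \<phi>} (foc \<phi> x)))"

definition vac_ext :: "('a \<Rightarrow> 'a \<Rightarrow> 'a) \<Rightarrow> ('l \<Rightarrow> 'a) \<Rightarrow> 'a \<Rightarrow> 'l \<Rightarrow> 'a" where
  "vac_ext comb e \<phi> y = comb \<phi> (e y)"

definition sigma_equiv :: "('a \<Rightarrow> 'l::lattice) \<Rightarrow> ('a \<Rightarrow> 'a \<Rightarrow> 'a) \<Rightarrow> ('l \<Rightarrow> 'a) \<Rightarrow> 'a \<Rightarrow> 'a \<Rightarrow> bool" where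
  "sigma_equiv d comb e \<phi> \<psi> \<longleftrightarrow>
     vac_ext comb e \<phi> (sup (d \<phi>) (d \<psi>)) = vac_ext comb e \<psi> (sup (d \<phi>) (d \<psi>))"

definition sigma_class :: "('a \<Rightarrow> 'l::lattice) \<Rightarrow> ('a \<Rightarrow> 'a \<Rightarrow> 'a) \<Rightarrow> ('l \<Rightarrow> 'a) \<Rightarrow> 'a \<Rightarrow> 'a set" where
  "sigma_class d comb e \<phi> = {\<psi>. sigma_equiv d comb e \<phi> \<psi>}"

definition quot_carrier :: "('a \<Rightarrow> 'l::lattice) \<Rightarrow> ('a \<Rightarrow> 'a \<Rightarrow> 'a) \<Rightarrow> ('l \<Rightarrow> 'a) \<Rightarrow> 'a set set" where
  "quot_carrier d comb e = range (sigma_class d comb e)"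

definition quot_comb :: "('a \<Rightarrow> 'l::lattice) \<Rightarrow> ('a \<Rightarrow> 'a \<Rightarrow> 'a) \<Rightarrow> ('l \<Rightarrow> 'a)
    \<Rightarrow> 'a set \<Rightarrow> 'a set \<Rightarrow> 'a set" where
  "quot_comb d comb e A B = sigma_class d comb e (comb (SOME \<phi>. \<phi> \<in> A) (SOME \<psi>. \<psi> \<in> B))"

definition quot_foc :: "('a \<Rightarrow> 'l::lattice) \<Rightarrow> ('a \<Rightarrow> 'a \<Rightarrow> 'a) \<Rightarrow> ('a \<Rightarrow> 'l \<Rightarrow> 'a) \<Rightarrow> ('l \<Rightarrow> 'a)
    \<Rightarrow> 'a set \<Rightarrow> 'l \<Rightarrow> 'a set" where
  "quot_foc d comb marg e A x =
     (let \<phi> = (SOME \<phi>. \<phi> \<in> A) in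
      sigma_class d comb e (marg (vac_ext comb e \<phi> (sup x (d \<phi>))) x))"

text \<open>Neutral element of Phi/sigma: the class of e_top (all e_s are sigma-equivalent).\<close>
definition quot_neutral :: "('a \<Rightarrow> 'l::bounded_lattice_top) \<Rightarrow> ('a \<Rightarrow> 'a \<Rightarrow> 'a) \<Rightarrow> ('l \<Rightarrow> 'a) \<Rightarrow> 'a set" where
  "quot_neutral d comb e = sigma_class d comb e (e top)"

end

theory Submission
  imports Defs
begin

(*
  The \<sigma>-class of \<phi> is determined by the vacuous extension \<phi>\<up>\<top> = \<phi> \<otimes> e\<top>, and every
  valuation of domain \<top> is its own extension.  Hence [\<phi>]\<sigma> \<mapsto> \<phi>\<up>\<top> is an isomorphism of the
  information orders of \<Phi>/\<sigma> and \<Phi>\<top>.  Directed sets, suprema and the way-below relation are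
  invariant under order isomorphisms, so convergency, compactness and density of \<Phi>\<top> with
  \<Gamma>\<top> = \<Phi>f,\<top> carry over to \<Phi>/\<sigma> with \<Gamma> = {[\<psi>]\<sigma> | \<psi> \<in> \<Phi>f,\<top>}.  For strong density, focusing
  [\<phi>]\<sigma> on x corresponds to (\<phi>\<up>\<top>\<down>x)\<up>\<top>, and vacuous extension is left adjoint to
  marginalization (\<mu>\<up>\<top> \<le> \<phi> iff \<mu> \<le> \<phi>\<down>x), which lifts the strongly dense supremum in \<Phi>x
  to the required supremum in \<Phi>\<top>.
*)

lemma way_below_inD:
  "way_below_in A le a b \<Longrightarrow> X \<subseteq> A \<Longrightarrow> directed_in le X \<Longrightarrow> is_lub_in A le X s
    \<Longrightarrow> le b s \<Longrightarrow> \<exists>c\<in>X. le a c"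
  unfolding way_below_in_def by blast

lemma way_below_in_imp_le:
  assumes "b \<in> A" and "le b b" and "way_below_in A le a b"
  shows "le a b"
proof -
  have "directed_in le {b}" "is_lub_in A le {b} b"
    using assms(1,2) unfolding directed_in_def is_lub_in_def by auto
  then show ?thesis using way_below_inD[OF assms(3), of "{b}" b] assms by blast
qed

lemma way_below_in_le_trans:
  assumes "transp le" and "way_below_in A le a c" and "le c b"
  shows "way_below_in A le a b"
  unfolding way_below_in_def
proof (intro allI impI)
  fix X s assume "X \<subseteq> A" "directed_in le X" "is_lub_in A le X s" "le b s"
  moreover have "le c s" using assms(1,3) \<open>le b s\<close> by (rule transpD)
  ultimately show "\<exists>c\<in>X. le a c" using way_below_inD[OF assms(2)] by blast
qed

locale order_iso_on =
  fixes h :: "'b \<Rightarrow> 'c" and P :: "'b set" and T :: "'c set"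
    and le :: "'b \<Rightarrow> 'b \<Rightarrow> bool" and le' :: "'c \<Rightarrow> 'c \<Rightarrow> bool"
  assumes inj: "inj_on h P" and image_eq: "h ` P = T"
    and le_iff: "\<And>a b. a \<in> P \<Longrightarrow> b \<in> P \<Longrightarrow> le a b \<longleftrightarrow> le' (h a) (h b)"
begin

lemma directed_in_image_iff:
  assumes "X \<subseteq> P"
  shows "directed_in le' (h ` X) \<longleftrightarrow> directed_in le X"
  using assms unfolding directed_in_def by (auto simp: le_iff subset_iff)

lemma is_lub_in_image_iff:
  assumes "X \<subseteq> P" and "s \<in> P"
  shows "is_lub_in T le' (h ` X) (h s) \<longleftrightarrow> is_lub_in P le X s"
proof -
  have "(\<forall>u\<in>T. (\<forall>y\<in>h ` X. le' y u) \<longrightarrow> le' (h s) u) \<longleftrightarrow>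
        (\<forall>u\<in>P. (\<forall>x\<in>X. le x u) \<longrightarrow> le s u)"
    unfolding image_eq[symmetric] ball_simps using assms by (intro ball_cong) (auto simp: le_iff subset_iff)
  moreover have "(\<forall>y\<in>h ` X. le' y (h s)) \<longleftrightarrow> (\<forall>x\<in>X. le x s)"
    using assms by (auto simp: le_iff subset_iff)
  ultimately show ?thesis unfolding is_lub_in_def using assms image_eq by auto
qed

lemma ex_lub_in_image_iff:
  assumes "X \<subseteq> P"
  shows "(\<exists>t. is_lub_in T le' (h ` X) t) \<longleftrightarrow> (\<exists>s. is_lub_in P le X s)"
proof
  assume "\<exists>t. is_lub_in T le' (h ` X) t"
  then obtain t where t: "is_lub_in T le' (h ` X) t" by blast
  then obtain s where "s \<in> P" "t = h s" using image_eq unfolding is_lub_in_def by blast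
  then show "\<exists>s. is_lub_in P le X s" using t is_lub_in_image_iff[OF assms] by blast
next
  assume "\<exists>s. is_lub_in P le X s"
  then obtain s where s: "is_lub_in P le X s" by blast
  then have "s \<in> P" unfolding is_lub_in_def by blast
  then show "\<exists>t. is_lub_in T le' (h ` X) t" using s is_lub_in_image_iff[OF assms] by blast
qed

lemma image_preimage: "Y \<subseteq> T \<Longrightarrow> h ` {x\<in>P. h x \<in> Y} = Y"
  using image_eq by blast

lemma way_below_in_image_iff:
  assumes a: "a \<in> P" and b: "b \<in> P"
  shows "way_below_in T le' (h a) (h b) \<longleftrightarrow> way_below_in P le a b"
proof
  assume W: "way_below_in P le a b"
  show "way_below_in T le' (h a) (h b)"
    unfolding way_below_in_def
  proof (intro allI impI)
    fix Y t assume Y: "Y \<subseteq> T" "directed_in le' Y" "is_lub_in T le' Y t" "le' (h b) t"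
    define X where "X = {x\<in>P. h x \<in> Y}"
    have X: "X \<subseteq> P" "h ` X = Y" using image_preimage[OF Y(1)] unfolding X_def by auto
    obtain s where s: "s \<in> P" "t = h s" using Y(3) image_eq unfolding is_lub_in_def by blast
    have "directed_in le X" "is_lub_in P le X s" "le b s"
      using Y s X directed_in_image_iff[OF X(1)] is_lub_in_image_iff[OF X(1) s(1)] le_iff[OF b s(1)]
      by simp_all
    then obtain c where "c \<in> X" "le a c" using way_below_inD[OF W X(1)] by blast
    then show "\<exists>c\<in>Y. le' (h a) c" using X le_iff[OF a] by blast
  qed
next
  assume W: "way_below_in T le' (h a) (h b)"
  show "way_below_in P le a b"
    unfolding way_below_in_def
  proof (intro allI impI)
    fix X s assume X: "X \<subseteq> P" "directed_in le X" "is_lub_in P le X s" "le b s"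
    have "s \<in> P" using X(3) unfolding is_lub_in_def by blast
    then have "h ` X \<subseteq> T" "directed_in le' (h ` X)" "is_lub_in T le' (h ` X) (h s)"
      "le' (h b) (h s)"
      using X image_eq directed_in_image_iff[OF X(1)] is_lub_in_image_iff[OF X(1)] le_iff[OF b]
      by auto
    then obtain c where "c \<in> X" "le' (h a) (h c)" using way_below_inD[OF W] by blast
    then show "\<exists>c\<in>X. le a c" using X(1) le_iff[OF a] by blast
  qed
qed

lemma image_way_below_set:
  assumes "G \<subseteq> P" and "a \<in> P"
  shows "h ` {g\<in>G. way_below_in P le g a} = {y\<in>h ` G. way_below_in T le' y (h a)}"
proof -
  have "\<And>g. g \<in> G \<Longrightarrow> way_below_in T le' (h g) (h a) \<longleftrightarrow> way_below_in P le g a"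
    using assms way_below_in_image_iff by blast
  then show ?thesis by blast
qed

lemma convergency_transfer:
  assumes "G \<subseteq> P" and "\<forall>Y. Y \<subseteq> h ` G \<longrightarrow> directed_in le' Y \<longrightarrow> (\<exists>t. is_lub_in T le' Y t)"
  shows "\<forall>X. X \<subseteq> G \<longrightarrow> directed_in le X \<longrightarrow> (\<exists>s. is_lub_in P le X s)"
proof (intro allI impI)
  fix X assume X: "X \<subseteq> G" "directed_in le X"
  have "X \<subseteq> P" using X(1) assms(1) by blast
  moreover have "\<exists>t. is_lub_in T le' (h ` X) t"
    using assms(2) X \<open>X \<subseteq> P\<close> directed_in_image_iff by blast
  ultimately show "\<exists>s. is_lub_in P le X s" using ex_lub_in_image_iff by blast
qed

lemma compactness_transfer:
  assumes "G \<subseteq> P"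
    and "\<forall>Y c. Y \<subseteq> h ` G \<longrightarrow> directed_in le' Y \<longrightarrow> c \<in> h ` G \<longrightarrow>
           (\<exists>t. is_lub_in T le' Y t \<and> le' c t) \<longrightarrow> (\<exists>y\<in>Y. le' c y)"
  shows "\<forall>X c. X \<subseteq> G \<longrightarrow> directed_in le X \<longrightarrow> c \<in> G \<longrightarrow>
           (\<exists>s. is_lub_in P le X s \<and> le c s) \<longrightarrow> (\<exists>x\<in>X. le c x)"
proof (intro allI impI)
  fix X c assume X: "X \<subseteq> G" "directed_in le X" "c \<in> G" "\<exists>s. is_lub_in P le X s \<and> le c s"
  then obtain s where s: "is_lub_in P le X s" "le c s" by blast
  have XP: "X \<subseteq> P" and cP: "c \<in> P" and sP: "s \<in> P"
    using X(1,3) assms(1) s(1) unfolding is_lub_in_def by blast+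
  have "h ` X \<subseteq> h ` G" "directed_in le' (h ` X)" "h c \<in> h ` G"
    "is_lub_in T le' (h ` X) (h s)" "le' (h c) (h s)"
    using X s directed_in_image_iff[OF XP] is_lub_in_image_iff[OF XP sP] le_iff[OF cP sP]
    by (simp_all add: image_mono)
  then obtain x where "x \<in> X" "le' (h c) (h x)" using assms(2) by blast
  then show "\<exists>x\<in>X. le c x" using XP cP le_iff by blast
qed

lemma density_transfer:
  assumes "G \<subseteq> P" and "\<forall>t\<in>T. is_lub_in T le' {y\<in>h ` G. way_below_in T le' y t} t"
  shows "\<forall>a\<in>P. is_lub_in P le {g\<in>G. way_below_in P le g a} a"
proof
  fix a assume a: "a \<in> P"
  then have "h a \<in> T" using image_eq by blast
  then have "is_lub_in T le' (h ` {g\<in>G. way_below_in P le g a}) (h a)"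
    unfolding image_way_below_set[OF assms(1) a] by (rule assms(2)[rule_format])
  moreover have "{g\<in>G. way_below_in P le g a} \<subseteq> P" using assms(1) by blast
  ultimately show "is_lub_in P le {g\<in>G. way_below_in P le g a} a"
    using is_lub_in_image_iff[OF _ a] by blast
qed

end

locale labeled_information_algebra =
  fixes d :: "'a \<Rightarrow> 'l::lattice" and comb :: "'a \<Rightarrow> 'a \<Rightarrow> 'a"
    and marg :: "'a \<Rightarrow> 'l \<Rightarrow> 'a" and e :: "'l \<Rightarrow> 'a"
  assumes comb_assoc: "comb (comb \<phi> \<psi>) \<chi> = comb \<phi> (comb \<psi> \<chi>)"
    and comb_commute: "comb \<phi> \<psi> = comb \<psi> \<phi>"
    and d_e [simp]: "d (e s) = s"
    and e_comb_neutral: "d \<phi> = s \<Longrightarrow> comb (e s) \<phi> = \<phi>"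
    and d_comb [simp]: "d (comb \<phi> \<psi>) = sup (d \<phi>) (d \<psi>)"
    and d_marg [simp]: "x \<le> d \<phi> \<Longrightarrow> d (marg \<phi> x) = x"
    and marg_marg: "x \<le> y \<Longrightarrow> y \<le> d \<phi> \<Longrightarrow> marg (marg \<phi> y) x = marg \<phi> x"
    and marg_comb: "d \<phi> = x \<Longrightarrow> d \<psi> = y \<Longrightarrow> marg (comb \<phi> \<psi>) x = comb \<phi> (marg \<psi> (inf x y))"
    and marg_e: "x \<le> y \<Longrightarrow> marg (e y) x = e x"
    and comb_marg_absorb: "x \<le> d \<phi> \<Longrightarrow> comb \<phi> (marg \<phi> x) = \<phi>"
begin

lemma comb_left_commute: "comb \<phi> (comb \<psi> \<chi>) = comb \<psi> (comb \<phi> \<chi>)"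
  by (simp only: comb_assoc[symmetric] comb_commute[of \<phi> \<psi>])

lemmas comb_ac = comb_assoc comb_commute comb_left_commute

lemma comb_e_neutral: "d \<phi> = s \<Longrightarrow> comb \<phi> (e s) = \<phi>"
  using e_comb_neutral comb_commute by metis

lemma marg_d: "marg \<phi> (d \<phi>) = \<phi>"
proof -
  have "marg (comb \<phi> (e (d \<phi>))) (d \<phi>) = comb \<phi> (marg (e (d \<phi>)) (inf (d \<phi>) (d \<phi>)))"
    by (rule marg_comb) simp_all
  then show ?thesis by (simp add: marg_e comb_e_neutral)
qed

lemma comb_idem: "comb \<phi> \<phi> = \<phi>"
  using comb_marg_absorb[of "d \<phi>" \<phi>] by (simp add: marg_d)

lemma e_comb_e: "comb (e x) (e y) = e (sup x y)"
proof -
  have absorb: "comb (e (sup x y)) (e z) = e (sup x y)" if "z \<le> sup x y" for z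
    using comb_marg_absorb[of z "e (sup x y)"] that by (simp add: marg_e)
  have "comb (e x) (e y) = comb (comb (e (sup x y)) (e x)) (e y)"
    by (simp add: comb_assoc e_comb_neutral)
  also have "\<dots> = e (sup x y)" by (simp add: absorb)
  finally show ?thesis .
qed

lemma info_le_refl: "info_le comb \<phi> \<phi>"
  unfolding info_le_def by (rule comb_idem)

lemma transp_info_le: "transp (info_le comb)"
  unfolding info_le_def by (rule transpI) (metis comb_assoc)

end

lemma labeled_ia_iff: "labeled_ia d comb marg e \<longleftrightarrow> labeled_information_algebra d comb marg e"
  unfolding labeled_ia_def labeled_information_algebra_def by auto

locale labeled_information_algebra_top = labeled_information_algebra d comb marg e
  for d :: "'a \<Rightarrow> 'l::bounded_lattice_top" and comb marg e
begin

definition lift_top :: "'a \<Rightarrow> 'a" where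
  "lift_top \<phi> = comb \<phi> (e top)"

lemma d_lift_top [simp]: "d (lift_top \<phi>) = top"
  unfolding lift_top_def by simp

lemma lift_top_eq_self: "d \<phi> = top \<Longrightarrow> lift_top \<phi> = \<phi>"
  unfolding lift_top_def by (rule comb_e_neutral)

lemma lift_top_lift_top [simp]: "lift_top (lift_top \<phi>) = lift_top \<phi>"
  by (simp add: lift_top_eq_self)

lemma lift_top_comb: "lift_top (comb \<phi> \<psi>) = comb (lift_top \<phi>) (lift_top \<psi>)"
proof -
  have "comb (lift_top \<phi>) (lift_top \<psi>) = comb (comb \<phi> \<psi>) (comb (e top) (e top))"
    unfolding lift_top_def by (simp only: comb_ac)
  then show ?thesis unfolding lift_top_def by (simp add: e_comb_e)
qed

lemma lift_top_comb_e: "lift_top (comb \<phi> (e z)) = lift_top \<phi>"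
  unfolding lift_top_def by (simp add: comb_assoc e_comb_e)

lemma marg_lift_top: "d \<phi> \<le> z \<Longrightarrow> marg (lift_top \<phi>) z = comb \<phi> (e z)"
  using marg_comb[of "comb \<phi> (e z)" z "e top" top] lift_top_comb_e[of \<phi> z]
  by (simp add: lift_top_def sup_absorb2 marg_e comb_assoc e_comb_e)

lemma marg_lift_top_self: "marg (lift_top \<phi>) (d \<phi>) = \<phi>"
  by (simp add: marg_lift_top comb_e_neutral)

lemma sigma_equiv_iff: "sigma_equiv d comb e \<phi> \<psi> \<longleftrightarrow> lift_top \<phi> = lift_top \<psi>"
  unfolding sigma_equiv_def vac_ext_def
  by (metis lift_top_comb_e marg_lift_top sup_ge1 sup_ge2)

abbreviation sclass :: "'a \<Rightarrow> 'a set" where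
  "sclass \<equiv> sigma_class d comb e"

lemma sclass_eq_iff: "sclass \<phi> = sclass \<psi> \<longleftrightarrow> lift_top \<phi> = lift_top \<psi>"
  unfolding sigma_class_def sigma_equiv_iff by (auto simp: set_eq_iff)

lemma sclass_lift_top [simp]: "sclass (lift_top \<phi>) = sclass \<phi>"
  by (simp add: sclass_eq_iff)

lemma lift_top_some_sclass: "lift_top (SOME \<psi>. \<psi> \<in> sclass \<phi>) = lift_top \<phi>"
proof -
  have "\<phi> \<in> sclass \<phi>" unfolding sigma_class_def sigma_equiv_iff by simp
  then have "(SOME \<psi>. \<psi> \<in> sclass \<phi>) \<in> sclass \<phi>" by (rule someI)
  then show ?thesis unfolding sigma_class_def sigma_equiv_iff by simp
qed

lemma quot_comb_sclass: "quot_comb d comb e (sclass \<phi>) (sclass \<psi>) = sclass (comb \<phi> \<psi>)"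
  unfolding quot_comb_def sclass_eq_iff lift_top_comb lift_top_some_sclass ..

lemma quot_foc_sclass: "quot_foc d comb marg e (sclass \<phi>) x = sclass (marg (lift_top \<phi>) x)"
proof -
  let ?\<chi> = "SOME \<psi>. \<psi> \<in> sclass \<phi>"
  have "marg (comb ?\<chi> (e (sup x (d ?\<chi>)))) x = marg (marg (lift_top ?\<chi>) (sup x (d ?\<chi>))) x"
    by (simp add: marg_lift_top)
  also have "\<dots> = marg (lift_top \<phi>) x"
    by (simp add: marg_marg lift_top_some_sclass)
  finally show ?thesis unfolding quot_foc_def Let_def vac_ext_def by simp
qed

abbreviation "Qcarrier \<equiv> quot_carrier d comb e"
abbreviation "Qcomb \<equiv> quot_comb d comb e"
abbreviation "Qfoc \<equiv> quot_foc d comb marg e"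
abbreviation "Qneutral \<equiv> quot_neutral d comb e"

lemma sclass_in_Qcarrier [simp]: "sclass \<phi> \<in> Qcarrier"
  unfolding quot_carrier_def by blast

lemma Qcarrier_cases:
  assumes "A \<in> Qcarrier"
  obtains \<phi> where "A = sclass \<phi>"
  using assms unfolding quot_carrier_def by blast

definition top_rep :: "'a set \<Rightarrow> 'a" where
  "top_rep A = lift_top (SOME \<phi>. \<phi> \<in> A)"

lemma top_rep_sclass [simp]: "top_rep (sclass \<phi>) = lift_top \<phi>"
  unfolding top_rep_def by (rule lift_top_some_sclass)

lemma info_le_Qcomb_sclass_iff:
  "info_le Qcomb (sclass \<phi>) (sclass \<psi>) \<longleftrightarrow> info_le comb (lift_top \<phi>) (lift_top \<psi>)"
  unfolding info_le_def quot_comb_sclass sclass_eq_iff lift_top_comb ..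

lemma order_iso_top_rep:
  "order_iso_on top_rep Qcarrier (Phi_at d top) (info_le Qcomb) (info_le comb)"
proof
  show "inj_on top_rep Qcarrier"
    by (rule inj_onI, elim Qcarrier_cases) (simp add: sclass_eq_iff)
  show "top_rep ` Qcarrier = Phi_at d top"
  proof
    show "top_rep ` Qcarrier \<subseteq> Phi_at d top" unfolding Phi_at_def by (auto elim: Qcarrier_cases)
    show "Phi_at d top \<subseteq> top_rep ` Qcarrier"
    proof
      fix \<phi> assume "\<phi> \<in> Phi_at d top"
      then have "\<phi> = top_rep (sclass \<phi>)" unfolding Phi_at_def by (simp add: lift_top_eq_self)
      then show "\<phi> \<in> top_rep ` Qcarrier" using sclass_in_Qcarrier by (rule image_eqI)
    qed
  qed
  show "info_le Qcomb A B \<longleftrightarrow> info_le comb (top_rep A) (top_rep B)"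
    if "A \<in> Qcarrier" "B \<in> Qcarrier" for A B
    using that by (elim Qcarrier_cases) (simp add: info_le_Qcomb_sclass_iff)
qed

lemma lift_top_marg_lift_top_marg:
  assumes "d \<phi> = top"
  shows "lift_top (marg (lift_top (marg \<phi> x)) y) = lift_top (marg \<phi> (inf x y))"
proof -
  let ?\<chi> = "marg \<phi> x"
  have d\<chi>: "d ?\<chi> = x" using assms by simp
  have "comb ?\<chi> (e (sup x y)) = comb (comb ?\<chi> (e x)) (e y)"
    by (simp only: comb_assoc e_comb_e)
  also have "\<dots> = comb (e y) ?\<chi>"
    unfolding comb_e_neutral[OF d\<chi>] by (rule comb_commute)
  finally have "marg (lift_top ?\<chi>) y = marg (comb (e y) ?\<chi>) y"
    using marg_marg[of y "sup x y" "lift_top ?\<chi>"] d\<chi> by (simp add: marg_lift_top)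
  also have "\<dots> = comb (e y) (marg ?\<chi> (inf y x))"
    by (rule marg_comb) (simp_all add: d\<chi>)
  also have "\<dots> = comb (marg \<phi> (inf x y)) (e y)"
    using marg_marg[of "inf y x" x \<phi>] assms by (simp add: inf_commute comb_commute)
  finally show ?thesis by (simp add: lift_top_comb_e)
qed

lemma df_ia_quot: "df_ia Qcarrier Qcomb Qneutral Qfoc"
proof -
  have neutral: "Qcomb Qneutral (sclass \<phi>) = sclass \<phi>" for \<phi>
    unfolding quot_neutral_def quot_comb_sclass sclass_eq_iff lift_top_comb
    by (simp add: lift_top_eq_self e_comb_neutral)
  have transitivity: "Qfoc (Qfoc (sclass \<phi>) x) y = Qfoc (sclass \<phi>) (inf x y)" for \<phi> x y
    unfolding quot_foc_sclass sclass_eq_iff by (simp add: lift_top_marg_lift_top_marg)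
  have combination:
    "Qfoc (Qcomb (Qfoc (sclass \<phi>) x) (sclass \<psi>)) x = Qcomb (Qfoc (sclass \<phi>) x) (Qfoc (sclass \<psi>) x)"
    for \<phi> \<psi> x
  proof -
    let ?\<mu> = "marg (lift_top \<phi>) x"
    have "lift_top (comb ?\<mu> \<psi>) = comb ?\<mu> (lift_top \<psi>)"
      unfolding lift_top_def by (simp add: comb_assoc)
    then show ?thesis
      using marg_comb[of ?\<mu> x "lift_top \<psi>" top]
      unfolding quot_foc_sclass quot_comb_sclass by simp
  qed
  have support: "\<exists>x. Qfoc (sclass \<phi>) x = sclass \<phi>" for \<phi>
    using marg_d[of "lift_top \<phi>"] unfolding quot_foc_sclass by (metis sclass_lift_top d_lift_top)
  have idempotency: "Qcomb (sclass \<phi>) (Qfoc (sclass \<phi>) x) = sclass \<phi>" for \<phi> x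
  proof -
    have "comb (lift_top \<phi>) (comb (marg (lift_top \<phi>) x) (e top)) = lift_top \<phi>"
      using comb_marg_absorb[of x "lift_top \<phi>"]
      by (simp add: comb_assoc[symmetric] comb_e_neutral)
    then show ?thesis
      unfolding quot_foc_sclass quot_comb_sclass sclass_eq_iff lift_top_comb
      by (simp add: lift_top_def[of "marg _ _"])
  qed
  show ?thesis
    unfolding df_ia_def
    by (intro conjI ballI allI; (elim Qcarrier_cases)?; hypsubst?;
        (simp only: neutral transitivity combination support idempotency)?)
      (simp_all add: quot_comb_sclass quot_foc_sclass quot_neutral_def comb_ac)
qed

lemma info_le_lift_top_iff:
  assumes d\<mu>: "d \<mu> = x" and d\<phi>: "d \<phi> = top"
  shows "info_le comb (lift_top \<mu>) \<phi> \<longleftrightarrow> info_le comb \<mu> (marg \<phi> x)"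
proof -
  have lift: "comb (lift_top \<mu>) \<phi> = comb \<mu> \<phi>"
    unfolding lift_top_def comb_assoc e_comb_neutral[OF d\<phi>] ..
  have "marg (comb \<mu> \<phi>) x = comb \<mu> (marg \<phi> x)"
    using marg_comb[OF d\<mu> d\<phi>] by simp
  moreover have "comb \<mu> \<phi> = comb \<phi> (comb \<mu> (marg \<phi> x))"
    using comb_marg_absorb[of x \<phi>] d\<phi> by (metis comb_left_commute top_greatest)
  ultimately show ?thesis
    unfolding info_le_def lift using comb_marg_absorb[of x \<phi>] d\<phi> by fastforce
qed

lemma lift_top_mono: "info_le comb \<mu> \<nu> \<Longrightarrow> info_le comb (lift_top \<mu>) (lift_top \<nu>)"
  unfolding info_le_def by (metis lift_top_comb)

lemma way_below_in_lift_top: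
  assumes d\<chi>: "d \<chi> = x" and d\<phi>: "d \<phi> = top" and compact: "lift_top \<chi> \<in> Phi_f d comb top"
    and below: "info_le comb \<chi> (marg \<phi> x)"
  shows "way_below_in (Phi_at d top) (info_le comb) (lift_top \<chi>) \<phi>"
proof -
  have "info_le comb (lift_top \<chi>) \<phi>" using below info_le_lift_top_iff[OF d\<chi> d\<phi>] by blast
  then show ?thesis
    using transp_info_le compact unfolding Phi_f_def by (blast intro: way_below_in_le_trans)
qed

lemma info_le_lift_top_marg:
  assumes d\<phi>: "d \<phi> = top" and d\<gamma>: "d \<gamma> = top" and fixed: "lift_top (marg \<gamma> x) = \<gamma>"
    and le: "info_le comb \<gamma> \<phi>"
  shows "info_le comb \<gamma> (lift_top (marg \<phi> x))"
proof -
  have "d (marg \<gamma> x) = x" using d\<gamma> by simp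
  then have "info_le comb (marg \<gamma> x) (marg \<phi> x)"
    using info_le_lift_top_iff[OF _ d\<phi>] le fixed by metis
  then show ?thesis using lift_top_mono fixed by metis
qed

lemma is_lub_in_lift_top:
  assumes lub: "is_lub_in (Phi_at d x) (info_le comb) L \<sigma>" and L: "L \<subseteq> Phi_at d x"
    and Y: "lift_top ` L \<subseteq> Y" and upper: "\<forall>\<psi>\<in>Y. info_le comb \<psi> (lift_top \<sigma>)"
  shows "is_lub_in (Phi_at d top) (info_le comb) Y (lift_top \<sigma>)"
  unfolding is_lub_in_def
proof (intro conjI ballI impI)
  show "lift_top \<sigma> \<in> Phi_at d top" unfolding Phi_at_def by simp
  show "info_le comb \<psi> (lift_top \<sigma>)" if "\<psi> \<in> Y" for \<psi> using upper that by blast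
  fix \<phi> assume \<phi>: "\<phi> \<in> Phi_at d top" and above: "\<forall>\<psi>\<in>Y. info_le comb \<psi> \<phi>"
  have d\<phi>: "d \<phi> = top" using \<phi> unfolding Phi_at_def by simp
  have "info_le comb \<mu> (marg \<phi> x)" if "\<mu> \<in> L" for \<mu>
    using that above Y L info_le_lift_top_iff[OF _ d\<phi>] unfolding Phi_at_def by blast
  moreover have "marg \<phi> x \<in> Phi_at d x" using d\<phi> unfolding Phi_at_def by simp
  ultimately have "info_le comb \<sigma> (marg \<phi> x)" using lub unfolding is_lub_in_def by blast
  moreover have "d \<sigma> = x" using lub unfolding is_lub_in_def Phi_at_def by simp
  ultimately show "info_le comb (lift_top \<sigma>) \<phi>" using info_le_lift_top_iff d\<phi> by blast
qed

abbreviation "Qfinite \<equiv> sclass ` Phi_f d comb top"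

lemma d_Phi_f: "\<phi> \<in> Phi_f d comb x \<Longrightarrow> d \<phi> = x"
  unfolding Phi_f_def Phi_at_def by simp

lemma top_rep_Qfinite: "top_rep ` Qfinite = Phi_f d comb top"
  by (force simp: image_image lift_top_eq_self d_Phi_f)

lemma top_rep_Qfinite_focus_fixed:
  "top_rep ` {\<Psi>\<in>Qfinite. Qfoc \<Psi> x = \<Psi>} = {\<phi>\<in>Phi_f d comb top. lift_top (marg \<phi> x) = \<phi>}"
proof -
  have "Qfoc (sclass \<phi>) x = sclass \<phi> \<longleftrightarrow> lift_top (marg \<phi> x) = \<phi>" if "\<phi> \<in> Phi_f d comb top" for \<phi>
    using d_Phi_f[OF that] by (simp add: quot_foc_sclass sclass_eq_iff lift_top_eq_self)
  then show ?thesis by (force simp: lift_top_eq_self d_Phi_f)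
qed

lemma top_rep_focus_fixed_way_below:
  "top_rep ` {\<Psi>\<in>Qfinite. Qfoc \<Psi> x = \<Psi> \<and> way_below_in Qcarrier (info_le Qcomb) \<Psi> (sclass \<alpha>)} =
   {\<gamma>\<in>Phi_f d comb top. lift_top (marg \<gamma> x) = \<gamma> \<and>
      way_below_in (Phi_at d top) (info_le comb) \<gamma> (lift_top \<alpha>)}"
proof -
  interpret order_iso_on top_rep Qcarrier "Phi_at d top" "info_le Qcomb" "info_le comb"
    by (rule order_iso_top_rep)
  have "{\<Psi>\<in>Qfinite. Qfoc \<Psi> x = \<Psi>} \<subseteq> Qcarrier" by auto
  from image_way_below_set[OF this sclass_in_Qcarrier, of \<alpha>] show ?thesis
    unfolding top_rep_Qfinite_focus_fixed by (simp add: conj_assoc)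
qed

lemma df_compact_base_quot:
  assumes "labeled_compact_base d comb marg e (Phi_f d comb)"
  shows "df_compact_base Qcarrier Qcomb Qneutral Qfoc Qfinite"
proof -
  interpret order_iso_on top_rep Qcarrier "Phi_at d top" "info_le Qcomb" "info_le comb"
    by (rule order_iso_top_rep)
  have sub: "Qfinite \<subseteq> Qcarrier" by auto
  have closed: "\<forall>x. Phi_f d comb x \<subseteq> Phi_at d x \<and> e x \<in> Phi_f d comb x \<and>
      (\<forall>\<phi>\<in>Phi_f d comb x. \<forall>\<psi>\<in>Phi_f d comb x. comb \<phi> \<psi> \<in> Phi_f d comb x)"
    using assms unfolding labeled_compact_base_def by (elim conjE) simp
  have convergency: "\<forall>Y. Y \<subseteq> Phi_f d comb top \<longrightarrow> directed_in (info_le comb) Y \<longrightarrow>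
      (\<exists>t. is_lub_in (Phi_at d top) (info_le comb) Y t)"
    using assms unfolding labeled_compact_base_def by (elim conjE) simp
  have compactness: "\<forall>Y c. Y \<subseteq> Phi_f d comb top \<longrightarrow> directed_in (info_le comb) Y \<longrightarrow>
      c \<in> Phi_f d comb top \<longrightarrow> (\<exists>t. is_lub_in (Phi_at d top) (info_le comb) Y t \<and> info_le comb c t)
      \<longrightarrow> (\<exists>y\<in>Y. info_le comb c y)"
    using assms unfolding labeled_compact_base_def by (elim conjE) simp
  show ?thesis
    unfolding df_compact_base_def
  proof (intro conjI)
    show "Qneutral \<in> Qfinite" unfolding quot_neutral_def using closed by blast
    show "\<forall>A\<in>Qfinite. \<forall>B\<in>Qfinite. Qcomb A B \<in> Qfinite"
      using closed by (auto simp: quot_comb_sclass)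
    show "\<forall>X. X \<subseteq> Qfinite \<longrightarrow> directed_in (info_le Qcomb) X \<longrightarrow>
            (\<exists>s. is_lub_in Qcarrier (info_le Qcomb) X s)"
      using convergency_transfer[OF sub, unfolded top_rep_Qfinite] convergency by blast
    show "\<forall>X \<Phi>. X \<subseteq> Qfinite \<longrightarrow> directed_in (info_le Qcomb) X \<longrightarrow> \<Phi> \<in> Qfinite \<longrightarrow>
            (\<exists>s. is_lub_in Qcarrier (info_le Qcomb) X s \<and> info_le Qcomb \<Phi> s) \<longrightarrow>
            (\<exists>\<Psi>\<in>X. info_le Qcomb \<Phi> \<Psi>)"
      using compactness_transfer[OF sub, unfolded top_rep_Qfinite] compactness by blast
  qed (rule sub)
qed

lemma df_density_quot:
  assumes "\<forall>\<phi>\<in>Phi_at d top. is_lub_in (Phi_at d top) (info_le comb)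
             {\<psi>\<in>Phi_f d comb top. way_below_in (Phi_at d top) (info_le comb) \<psi> \<phi>} \<phi>"
  shows "\<forall>A\<in>Qcarrier. is_lub_in Qcarrier (info_le Qcomb)
           {\<Psi>\<in>Qfinite. way_below_in Qcarrier (info_le Qcomb) \<Psi> A} A"
proof -
  interpret order_iso_on top_rep Qcarrier "Phi_at d top" "info_le Qcomb" "info_le comb"
    by (rule order_iso_top_rep)
  show ?thesis
    by (rule density_transfer) (use assms in \<open>auto simp: top_rep_Qfinite\<close>)
qed

lemma df_strong_density_quot:
  assumes "\<forall>\<phi>\<in>Phi_at d x. is_lub_in (Phi_at d x) (info_le comb)
             {marg \<psi> x | \<psi>. x \<le> d \<psi> \<and> marg \<psi> x \<in> Phi_f d comb x \<and>
                comb (marg \<psi> x) (e top) \<in> Phi_f d comb top \<and>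
                way_below_in (Phi_at d x) (info_le comb) (marg \<psi> x) \<phi>} \<phi>"
  shows "\<forall>A\<in>Qcarrier. is_lub_in Qcarrier (info_le Qcomb)
           {\<Psi>\<in>Qfinite. Qfoc \<Psi> x = \<Psi> \<and> way_below_in Qcarrier (info_le Qcomb) \<Psi> A} (Qfoc A x)"
    (is "\<forall>A\<in>Qcarrier. is_lub_in _ _ (?S A) _")
proof
  interpret order_iso_on top_rep Qcarrier "Phi_at d top" "info_le Qcomb" "info_le comb"
    by (rule order_iso_top_rep)
  fix A assume A: "A \<in> Qcarrier"
  then obtain \<alpha> where A_eq: "A = sclass \<alpha>" by (rule Qcarrier_cases)
  define \<phi> where "\<phi> = lift_top \<alpha>"
  define \<sigma> where "\<sigma> = marg \<phi> x"
  have d\<phi>: "d \<phi> = top" and \<phi>_in: "\<phi> \<in> Phi_at d top" and \<sigma>_in: "\<sigma> \<in> Phi_at d x"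
    unfolding \<phi>_def \<sigma>_def Phi_at_def by simp_all
  define S where "S = ?S A"
  have image_S: "top_rep ` S = {\<gamma>\<in>Phi_f d comb top. lift_top (marg \<gamma> x) = \<gamma> \<and>
      way_below_in (Phi_at d top) (info_le comb) \<gamma> \<phi>}"
    unfolding S_def A_eq \<phi>_def by (rule top_rep_focus_fixed_way_below)
  let ?L = "{marg \<psi> x | \<psi>. x \<le> d \<psi> \<and> marg \<psi> x \<in> Phi_f d comb x \<and>
      comb (marg \<psi> x) (e top) \<in> Phi_f d comb top \<and>
      way_below_in (Phi_at d x) (info_le comb) (marg \<psi> x) \<sigma>}"
  have "is_lub_in (Phi_at d top) (info_le comb) (top_rep ` S) (lift_top \<sigma>)"
  proof (rule is_lub_in_lift_top)
    show "is_lub_in (Phi_at d x) (info_le comb) ?L \<sigma>" using assms \<sigma>_in by blast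
    show "?L \<subseteq> Phi_at d x" unfolding Phi_at_def by auto
    show "lift_top ` ?L \<subseteq> top_rep ` S"
    proof
      fix \<gamma> assume "\<gamma> \<in> lift_top ` ?L"
      then obtain \<chi> where \<gamma>: "\<gamma> = lift_top \<chi>" and d\<chi>: "d \<chi> = x" and \<gamma>_fin: "\<gamma> \<in> Phi_f d comb top"
        and \<chi>_below: "way_below_in (Phi_at d x) (info_le comb) \<chi> \<sigma>"
        unfolding lift_top_def by auto
      have "info_le comb \<chi> \<sigma>"
        using \<sigma>_in info_le_refl \<chi>_below by (rule way_below_in_imp_le)
      then have "way_below_in (Phi_at d top) (info_le comb) \<gamma> \<phi>"
        using way_below_in_lift_top[OF d\<chi> d\<phi>] \<gamma>_fin unfolding \<gamma> \<sigma>_def by blast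
      moreover have "lift_top (marg \<gamma> x) = \<gamma>"
        unfolding \<gamma> using marg_lift_top_self[of \<chi>] d\<chi> by simp
      ultimately show "\<gamma> \<in> top_rep ` S" unfolding image_S using \<gamma>_fin by blast
    qed
    show "\<forall>\<gamma>\<in>top_rep ` S. info_le comb \<gamma> (lift_top \<sigma>)"
    proof
      fix \<gamma> assume "\<gamma> \<in> top_rep ` S"
      then have \<gamma>_fin: "\<gamma> \<in> Phi_f d comb top" and fixed: "lift_top (marg \<gamma> x) = \<gamma>"
        and \<gamma>_below: "way_below_in (Phi_at d top) (info_le comb) \<gamma> \<phi>"
        unfolding image_S by auto
      have "info_le comb \<gamma> \<phi>"
        using \<phi>_in info_le_refl \<gamma>_below by (rule way_below_in_imp_le)
      then show "info_le comb \<gamma> (lift_top \<sigma>)"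
        unfolding \<sigma>_def by (rule info_le_lift_top_marg[OF d\<phi> d_Phi_f[OF \<gamma>_fin] fixed])
    qed
  qed
  moreover have "Qfoc A x = sclass \<sigma>" unfolding A_eq quot_foc_sclass \<sigma>_def \<phi>_def ..
  moreover have "S \<subseteq> Qcarrier" unfolding S_def by auto
  ultimately show "is_lub_in Qcarrier (info_le Qcomb) (?S A) (Qfoc A x)"
    unfolding S_def[symmetric]
    using is_lub_in_image_iff[of S "sclass \<sigma>"] by simp
qed

end

lemma labeled_information_algebra_top_if_compact_base:
  "labeled_compact_base d comb marg e \<Gamma> \<Longrightarrow> labeled_information_algebra_top d comb marg e"
  unfolding labeled_compact_base_def labeled_information_algebra_top_def labeled_ia_iff by (elim conjE)

theorem theorem4p11:
  fixes d :: "'a \<Rightarrow> 'l::bounded_lattice_top"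
    and comb :: "'a \<Rightarrow> 'a \<Rightarrow> 'a"
    and marg :: "'a \<Rightarrow> 'l \<Rightarrow> 'a"
    and e :: "'l \<Rightarrow> 'a"
  shows "(labeled_compact d comb marg e (Phi_f d comb) \<longrightarrow>
           df_compact (quot_carrier d comb e) (quot_comb d comb e) (quot_neutral d comb e)
             (quot_foc d comb marg e))
       \<and> (labeled_scompact d comb marg e (Phi_f d comb) \<longrightarrow>
           df_scompact (quot_carrier d comb e) (quot_comb d comb e) (quot_neutral d comb e)
             (quot_foc d comb marg e))"
proof (intro conjI impI)
  assume "labeled_compact d comb marg e (Phi_f d comb)"
  then have base: "labeled_compact_base d comb marg e (Phi_f d comb)"
    and density: "\<forall>x. \<forall>\<phi>\<in>Phi_at d x. is_lub_in (Phi_at d x) (info_le comb)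
          {\<psi>\<in>Phi_f d comb x. way_below_in (Phi_at d x) (info_le comb) \<psi> \<phi>} \<phi>"
    unfolding labeled_compact_def by simp_all
  interpret labeled_information_algebra_top d comb marg e
    using base by (rule labeled_information_algebra_top_if_compact_base)
  show "df_compact Qcarrier Qcomb Qneutral Qfoc"
    unfolding df_compact_def
    using df_ia_quot df_compact_base_quot[OF base] df_density_quot density by blast
next
  assume "labeled_scompact d comb marg e (Phi_f d comb)"
  then have base: "labeled_compact_base d comb marg e (Phi_f d comb)"
    and strong_density: "\<forall>x. \<forall>\<phi>\<in>Phi_at d x. is_lub_in (Phi_at d x) (info_le comb)
          {marg \<psi> x | \<psi>. x \<le> d \<psi> \<and> marg \<psi> x \<in> Phi_f d comb x \<and>
               comb (marg \<psi> x) (e top) \<in> Phi_f d comb top \<and>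
               way_below_in (Phi_at d x) (info_le comb) (marg \<psi> x) \<phi>} \<phi>"
    unfolding labeled_scompact_def by simp_all
  interpret labeled_information_algebra_top d comb marg e
    using base by (rule labeled_information_algebra_top_if_compact_base)
  show "df_scompact Qcarrier Qcomb Qneutral Qfoc"
    unfolding df_scompact_def
    using df_ia_quot df_compact_base_quot[OF base] df_strong_density_quot strong_density by blast
qed

end
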